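(* Let $R$ be an associative $\mathbb{C}$-algebra and $W$ a left $R$-module. Let $M=(M_{ij})_{0\leq i,j\leq N}$ be an almost triangular matrix with entries in $R$, and let $\xi=(\xi_0,\ldots,\xi_N)^T\in W^{N+1}$ satisfy $M\xi=0$. Then $\det_{\mathrm{right}}(M^\tau)\,\xi_N=0$.
   Context: Almost triangular matrix. A matrix $M$ is almost triangular if $M_{ij}=0$ whenever $i>j+1$ and $M_{i+1,i}=-1$ for all $i$. Anti-diagonal transpose. $M^\tau$ denotes the matrix with $M^\tau_{ij}=M_{N-j,N-i}$. Right determinant. For a square matrix $X=(X_{ij})_{0\leq i,j\leq m}$ over $R$: - if $m=0$, $\det_{\mathrm{right}}X=X_{00}$; - otherwise $\det_{\mathrm{right}}X=\sum_{i=0}^mX_{im}C_{im}$, where $C_{im}=(-1)^{i+m}\det_{\mathrm{right}}X^{(i,m)}$, $X^{(i,m)}$ is $X$ with row $i$ and column $m$ deleted, and products are taken in the order written. *)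

theory Defs
  imports Complex_Main
begin

definition complex_algebra :: "(complex \<Rightarrow> 'r::ring_1) \<Rightarrow> bool" where
  "complex_algebra emb \<longleftrightarrow>
     emb 1 = 1 \<and>
     (\<forall>a b. emb (a + b) = emb a + emb b) \<and>
     (\<forall>a b. emb (a * b) = emb a * emb b) \<and>
     (\<forall>a x. emb a * x = x * emb a)"

definition left_module :: "('r::ring_1 \<Rightarrow> 'w::ab_group_add \<Rightarrow> 'w) \<Rightarrow> bool" where
  "left_module act \<longleftrightarrow>
     (\<forall>a v w. act a (v + w) = act a v + act a w) \<and>
     (\<forall>a b w. act (a + b) w = act a w + act b w) \<and>
     (\<forall>a b w. act (a * b) w = act a (act b w)) \<and>
     (\<forall>w. act 1 w = w)"

text \<open>Matrices indexed by 0..N are functions nat => nat => 'r (only entries with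
indices \<le> N matter).\<close>
definition almost_triangular :: "nat \<Rightarrow> (nat \<Rightarrow> nat \<Rightarrow> 'r::ring_1) \<Rightarrow> bool" where
  "almost_triangular N M \<longleftrightarrow>
     (\<forall>i\<le>N. \<forall>j\<le>N. i > j + 1 \<longrightarrow> M i j = 0) \<and>
     (\<forall>i<N. M (Suc i) i = -1)"

definition antidiag_transpose :: "nat \<Rightarrow> (nat \<Rightarrow> nat \<Rightarrow> 'r) \<Rightarrow> nat \<Rightarrow> nat \<Rightarrow> 'r" where
  "antidiag_transpose N M = (\<lambda>i j. M (N - j) (N - i))"

definition minor_mat :: "(nat \<Rightarrow> nat \<Rightarrow> 'r) \<Rightarrow> nat \<Rightarrow> nat \<Rightarrow> nat \<Rightarrow> nat \<Rightarrow> 'r" where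
  "minor_mat X i j = (\<lambda>a b. X (if a < i then a else Suc a) (if b < j then b else Suc b))"

text \<open>Right determinant of the (m+1)x(m+1) matrix (X_ab), 0 \<le> a,b \<le> m,
expanded along the last column, products in the written order.\<close>
fun det_right :: "nat \<Rightarrow> (nat \<Rightarrow> nat \<Rightarrow> 'r::ring_1) \<Rightarrow> 'r" where
  "det_right 0 X = X 0 0"
| "det_right (Suc m) X =
     (\<Sum>i\<le>Suc m. X i (Suc m) * ((-1) ^ (i + Suc m) * det_right m (minor_mat X i (Suc m))))"

end

theory Submission
  imports Defs
begin

text \<open>The anti-diagonal transpose \<open>X = M\<^sup>\<tau>\<close> is again almost triangular. Deleting row \<open>i\<close>
and the last column of such an \<open>X\<close> leaves a block triangular matrix: the leading \<open>i \<times> i\<close>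
block of \<open>X\<close>, then a triangular block with diagonal \<open>-1\<close>. So expansion along the last
column collapses to \<open>det X = \<Sum>\<^sub>i X\<^sub>i\<^sub>m D\<^sub>i\<close>, with \<open>D\<^sub>i\<close> the right determinant of the leading
\<open>i \<times> i\<close> block, all signs cancelling. Reading the equations \<open>M\<xi> = 0\<close> from the bottom row up,
and using that row \<open>N - i + 1\<close> of \<open>M\<close> begins with \<open>-1\<close> in column \<open>N - i\<close>, induction gives
\<open>D\<^sub>i \<xi>\<^sub>N = \<xi>\<^sub>N\<^sub>-\<^sub>i\<close>. Then \<open>det(M\<^sup>\<tau>) \<xi>\<^sub>N\<close> is exactly the left-hand side of the top row equation.\<close>

definition leading_det :: "(nat \<Rightarrow> nat \<Rightarrow> 'r::ring_1) \<Rightarrow> nat \<Rightarrow> 'r" where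
  "leading_det X i = (if i = 0 then 1 else det_right (i - 1) X)"

lemma det_right_cong:
  "\<forall>a\<le>m. \<forall>b\<le>m. X a b = Y a b \<Longrightarrow> det_right m X = det_right m Y"
proof (induction m arbitrary: X Y)
  case (Suc m)
  have "det_right m (minor_mat X i (Suc m)) = det_right m (minor_mat Y i (Suc m))"
    if "i \<le> Suc m" for i
    using Suc.prems by (intro Suc.IH) (auto simp: minor_mat_def)
  then show ?case
    using Suc.prems by (auto intro!: sum.cong)
qed simp

lemma det_right_zero_row:
  assumes "r \<le> m" and "\<forall>j\<le>m. X r j = 0"
  shows "det_right m X = 0"
  using assms
proof (induction m arbitrary: X r)
  case (Suc m)
  have "X i (Suc m) * ((-1) ^ (i + Suc m) * det_right m (minor_mat X i (Suc m))) = 0"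
    if i: "i \<le> Suc m" for i
  proof (cases "i = r")
    case False
    define r' where "r' = (if r < i then r else r - 1)"
    have "r' \<le> m"
      using i False Suc.prems(1) by (auto simp: r'_def)
    moreover have "\<forall>j\<le>m. minor_mat X i (Suc m) r' j = 0"
      using False Suc.prems(2) by (auto simp: r'_def minor_mat_def)
    ultimately show ?thesis
      using Suc.IH by simp
  qed (use Suc.prems in simp)
  then show ?case
    by simp
qed simp

lemma det_right_last_row_neg_one:
  assumes "\<forall>j<Suc k. Y (Suc k) j = 0" and "Y (Suc k) (Suc k) = -1"
  shows "det_right (Suc k) Y = - det_right k Y"
proof -
  have "det_right k (minor_mat Y i (Suc k)) = 0" if "i \<le> k" for i
    using that assms(1) by (intro det_right_zero_row[of k]) (auto simp: minor_mat_def)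
  then have upper_terms:
    "(\<Sum>i\<le>k. Y i (Suc k) * ((-1) ^ (i + Suc k) * det_right k (minor_mat Y i (Suc k)))) = 0"
    by simp
  have last_minor: "det_right k (minor_mat Y (Suc k) (Suc k)) = det_right k Y"
    by (rule det_right_cong) (auto simp: minor_mat_def)
  have "(-1::'a) ^ (Suc k + Suc k) = 1"
    by (simp flip: mult_2)
  then show ?thesis
    by (simp only: det_right.simps sum.atMost_Suc upper_terms last_minor) (simp add: assms(2))
qed

lemma det_right_neg_unit_tail:
  assumes "\<forall>a. i \<le> a \<and> a \<le> i + d \<longrightarrow> (\<forall>b<a. Z a b = 0) \<and> Z a a = -1"
  shows "det_right (i + d) Z = (-1) ^ (d + 1) * leading_det Z i"
  using assms
proof (induction d)
  case 0
  show ?case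
  proof (cases i)
    case (Suc k)
    have "det_right (Suc k) Z = - det_right k Z"
      using "0.prems" Suc by (intro det_right_last_row_neg_one) auto
    then show ?thesis
      using Suc by (simp add: leading_det_def)
  qed (use "0.prems" in \<open>simp add: leading_det_def\<close>)
next
  case (Suc d)
  have "det_right (Suc (i + d)) Z = - det_right (i + d) Z"
    using Suc.prems by (intro det_right_last_row_neg_one) auto
  also have "det_right (i + d) Z = (-1) ^ (d + 1) * leading_det Z i"
    using Suc.prems by (intro Suc.IH) auto
  finally show ?case
    by simp
qed

lemma det_right_almost_triangular:
  assumes "almost_triangular m X"
  shows "det_right m X = (\<Sum>i\<le>m. X i m * leading_det X i)"
proof (cases m)
  case 0
  then show ?thesis
    by (simp add: leading_det_def)
next
  case (Suc n)
  have cofactor: "(-1) ^ (i + Suc n) * det_right n (minor_mat X i (Suc n)) = leading_det X i"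
    if i: "i \<le> Suc n" for i
  proof (cases "i = Suc n")
    case True
    have "det_right n (minor_mat X i (Suc n)) = det_right n X"
      using True by (intro det_right_cong) (auto simp: minor_mat_def)
    then show ?thesis
      using True by (simp add: leading_det_def)
  next
    case False
    define d where "d = n - i"
    have n: "n = i + d"
      using False i by (simp add: d_def)
    have "det_right n (minor_mat X i (Suc n))
        = (-1) ^ (d + 1) * leading_det (minor_mat X i (Suc n)) i"
      unfolding n
      using assms n by (intro det_right_neg_unit_tail)
        (auto simp: almost_triangular_def minor_mat_def Suc)
    moreover have "leading_det (minor_mat X i (Suc n)) i = leading_det X i"
      using n by (auto simp: leading_det_def minor_mat_def intro!: det_right_cong)
    moreover have "(-1::'a) ^ (i + Suc n) * (-1) ^ (d + 1) = 1"
      by (simp add: n power_add[symmetric] algebra_simps)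
    ultimately show ?thesis
      by (metis mult.assoc mult_1)
  qed
  show ?thesis
    unfolding Suc det_right.simps by (intro sum.cong refl) (simp only: atMost_iff cofactor)
qed

lemma almost_triangular_antidiag_transpose:
  assumes "almost_triangular N M" and "k \<le> N"
  shows "almost_triangular k (antidiag_transpose N M)"
  unfolding almost_triangular_def antidiag_transpose_def
proof (intro conjI allI impI)
  fix a assume "a < k"
  with assms have "M (Suc (N - Suc a)) (N - Suc a) = -1"
    by (auto simp: almost_triangular_def)
  moreover have "Suc (N - Suc a) = N - a"
    using \<open>a < k\<close> assms(2) by simp
  ultimately show "M (N - a) (N - Suc a) = -1"
    by simp
qed (use assms in \<open>auto simp: almost_triangular_def\<close>)

lemma left_module_zero: "left_module act \<Longrightarrow> act 0 w = 0"
proof -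
  assume "left_module act"
  then have "act (0 + 0) w = act 0 w + act 0 w"
    unfolding left_module_def by blast
  then show ?thesis
    by simp
qed

lemma left_module_neg_one: "left_module act \<Longrightarrow> act (-1) w = - w"
proof -
  assume module: "left_module act"
  then have "act (-1 + 1) w = act (-1) w + act 1 w"
    unfolding left_module_def by blast
  then have "act 0 w = act (-1) w + w"
    using module unfolding left_module_def by simp
  then show ?thesis
    using left_module_zero[OF module] by (simp add: eq_neg_iff_add_eq_0)
qed

lemma left_module_sum:
  "left_module act \<Longrightarrow> act (\<Sum>i\<in>A. f i) w = (\<Sum>i\<in>A. act (f i) w)"
  by (induction A rule: infinite_finite_induct) (simp_all add: left_module_zero left_module_def)

context
  fixes act :: "'r::ring_1 \<Rightarrow> 'w::ab_group_add \<Rightarrow> 'w"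
    and N :: nat
    and M :: "nat \<Rightarrow> nat \<Rightarrow> 'r"
    and \<xi> :: "nat \<Rightarrow> 'w"
  assumes module: "left_module act"
    and triangular: "almost_triangular N M"
    and kernel: "\<forall>i\<le>N. (\<Sum>j\<le>N. act (M i j) (\<xi> j)) = 0"
begin

lemma kernel_row_tail:
  assumes "Suc s \<le> N"
  shows "(\<Sum>j\<in>{Suc s..N}. act (M (Suc s) j) (\<xi> j)) = \<xi> s"
proof -
  have split: "{..N} = {..<s} \<union> {s..N}"
    using assms by auto
  have "(\<Sum>j\<le>N. act (M (Suc s) j) (\<xi> j))
      = (\<Sum>j<s. act (M (Suc s) j) (\<xi> j)) + (\<Sum>j\<in>{s..N}. act (M (Suc s) j) (\<xi> j))"
    unfolding split by (rule sum.union_disjoint) auto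
  then have "0 = (\<Sum>j<s. act (M (Suc s) j) (\<xi> j)) + (\<Sum>j\<in>{s..N}. act (M (Suc s) j) (\<xi> j))"
    using kernel assms by simp
  also have "(\<Sum>j<s. act (M (Suc s) j) (\<xi> j)) = 0"
    using triangular assms
    by (intro sum.neutral) (auto simp: almost_triangular_def left_module_zero[OF module])
  also have "(\<Sum>j\<in>{s..N}. act (M (Suc s) j) (\<xi> j))
      = act (M (Suc s) s) (\<xi> s) + (\<Sum>j\<in>{Suc s..N}. act (M (Suc s) j) (\<xi> j))"
    using assms by (simp add: sum.atLeast_Suc_atMost)
  also have "act (M (Suc s) s) (\<xi> s) = - \<xi> s"
    using triangular assms by (simp add: almost_triangular_def left_module_neg_one[OF module])
  finally show ?thesis
    by (simp add: neg_eq_iff_add_eq_0 add.commute)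
qed

lemma act_det_right_antidiag_transpose:
  assumes k: "k \<le> N"
    and leading: "\<forall>i\<le>k. act (leading_det (antidiag_transpose N M) i) (\<xi> N) = \<xi> (N - i)"
  shows "act (det_right k (antidiag_transpose N M)) (\<xi> N)
    = (\<Sum>j\<in>{N - k..N}. act (M (N - k) j) (\<xi> j))"
proof -
  let ?X = "antidiag_transpose N M"
  have "act (det_right k ?X) (\<xi> N) = (\<Sum>i\<le>k. act (?X i k * leading_det ?X i) (\<xi> N))"
    using det_right_almost_triangular[OF almost_triangular_antidiag_transpose[OF triangular k]]
    by (simp add: left_module_sum[OF module])
  also have "\<dots> = (\<Sum>i\<le>k. act (M (N - k) (N - i)) (\<xi> (N - i)))"
    using module leading by (intro sum.cong refl) (simp add: left_module_def antidiag_transpose_def)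
  also have "\<dots> = (\<Sum>j\<in>{N - k..N}. act (M (N - k) j) (\<xi> j))"
    using k by (intro sum.reindex_bij_witness[where i="\<lambda>j. N - j" and j="\<lambda>i. N - i"]) auto
  finally show ?thesis .
qed

lemma act_leading_det_antidiag_transpose:
  "k \<le> N \<Longrightarrow> act (leading_det (antidiag_transpose N M) k) (\<xi> N) = \<xi> (N - k)"
proof (induction k rule: less_induct)
  case (less k)
  show ?case
  proof (cases k)
    case 0
    then show ?thesis
      using module by (simp add: leading_det_def left_module_def)
  next
    case (Suc k')
    have "act (leading_det (antidiag_transpose N M) k) (\<xi> N)
        = (\<Sum>j\<in>{N - k'..N}. act (M (N - k') j) (\<xi> j))"
      using less Suc by (simp add: leading_det_def act_det_right_antidiag_transpose)
    also have "\<dots> = \<xi> (N - k)"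
      using kernel_row_tail[of "N - k"] less.prems Suc by (simp add: Suc_diff_Suc)
    finally show ?thesis .
  qed
qed

end

theorem lemma1p1p4:
  fixes emb :: "complex \<Rightarrow> 'r::ring_1"
    and act :: "'r \<Rightarrow> 'w::ab_group_add \<Rightarrow> 'w"
    and N :: nat
    and M :: "nat \<Rightarrow> nat \<Rightarrow> 'r"
    and \<xi> :: "nat \<Rightarrow> 'w"
  assumes "complex_algebra emb"
    and "left_module act"
    and "almost_triangular N M"
    and "\<forall>i\<le>N. (\<Sum>j\<le>N. act (M i j) (\<xi> j)) = 0"
  shows "act (det_right N (antidiag_transpose N M)) (\<xi> N) = 0"
proof -
  have "act (det_right N (antidiag_transpose N M)) (\<xi> N) = (\<Sum>j\<le>N. act (M 0 j) (\<xi> j))"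
    using assms(2-4)
    by (simp add: act_det_right_antidiag_transpose act_leading_det_antidiag_transpose atMost_atLeast0)
  also have "\<dots> = 0"
    using assms(4) by simp
  finally show ?thesis .
qed

end
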